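(* Let $N\ge1$, let $(X_j)_{j\in\mathbb{N}}$ be an i.i.d. sequence of random vectors uniformly distributed on the unit sphere $S^{N-1}\subset\mathbb{R}^N$, and let $Z$ be a centered Gaussian random vector in $\mathbb{R}^N$ with covariance matrix $\frac1N I_N$ (the covariance of $X_1$). Then \[ \lim_{n\to\infty}\Big\|\sum_{j=1}^n \tfrac{1}{\sqrt n}X_j\Big\|_{\psi_2}=\|Z\|_{\psi_2}=\sqrt{\frac{2}{N}}\sqrt{\frac{1}{1-(1/2)^{2/N}}}. \]
   Context: For an $\mathbb{R}^N$-valued random vector $X$, $\|X\|_{\psi_2}=\inf\{c>0:\ \mathbb{E}\exp(\|X\|^2/c^2)\le 2\}$, where $\|\cdot\|$ is the Euclidean norm on $\mathbb{R}^N$. *)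

theory Defs
  imports "HOL-Probability.Probability"
begin

definition psi2_norm :: "'a measure \<Rightarrow> ('a \<Rightarrow> 'b::real_normed_vector) \<Rightarrow> real" where
  "psi2_norm M X = Inf {c::real. c > 0 \<and>
      (\<integral>\<^sup>+ \<omega>. ennreal (exp ((norm (X \<omega>))\<^sup>2 / c\<^sup>2)) \<partial>M) \<le> 2}"

text \<open>Uniform (normalized surface / cone) measure on the unit sphere S^{N-1}:
  the push-forward of the uniform distribution on the punctured unit ball under x \<mapsto> x/|x|.\<close>
definition uniform_sphere :: "('a::euclidean_space) measure" where
  "uniform_sphere = distr (uniform_measure lborel (ball 0 1 - {0})) borel (\<lambda>x. x /\<^sub>R norm x)"

definition gauss_cov_inv_dim :: "'a::euclidean_space \<Rightarrow> real" where
  "gauss_cov_inv_dim x = (real DIM('a) / (2 * pi)) powr (real DIM('a) / 2)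
      * exp (- real DIM('a) * (norm x)\<^sup>2 / 2)"

end

theory Submission
  imports Defs
begin

text \<open>Writing \<open>exp(\<bar>y\<bar>\<^sup>2/c\<^sup>2)\<close> as a Gaussian average of \<open>exp((2/c) y\<bullet>x)\<close> and using independence,
  the \<open>\<psi>\<^sub>2\<close>-integral \<open>E exp(\<bar>S\<^sub>n\<bar>\<^sup>2/c\<^sup>2)\<close> of the normalized sum becomes
  \<open>\<pi>^(-N/2) \<integral> exp(-\<bar>x\<bar>\<^sup>2) \<phi>(2x/(c\<surd>n))^n dx\<close>, where \<open>\<phi>\<close> is the moment generating function of
  the uniform distribution on the sphere. Decomposing the standard Gaussian into an independent radius
  and direction expresses the moments of \<open>\<phi>\<close> through Gaussian moments, and comparing Taylor series
  gives \<open>1 + \<bar>s\<bar>\<^sup>2/(2N) \<le> \<phi>(s) \<le> exp(\<bar>s\<bar>\<^sup>2/(2N))\<close>. Hence the integral is bounded by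
  \<open>E exp(\<bar>Z\<bar>\<^sup>2/c\<^sup>2)\<close> for every \<open>n\<close> and converges to it by Fatou's lemma, so the \<open>\<psi>\<^sub>2\<close>-norms converge
  to that of \<open>Z\<close>, which is computed in closed form.\<close>

section \<open>Gaussian integrals\<close>

lemma nn_integral_lborel_scaleR:
  fixes f :: "'a::euclidean_space \<Rightarrow> ennreal"
  assumes [measurable]: "f \<in> borel_measurable borel" and c: "c \<noteq> 0"
  shows "(\<integral>\<^sup>+x. f x \<partial>lborel) = ennreal (\<bar>c\<bar> ^ DIM('a)) * (\<integral>\<^sup>+x. f (c *\<^sub>R x) \<partial>lborel)"
  by (subst lborel_affine[OF c, of 0])
     (simp add: nn_integral_density nn_integral_distr nn_integral_cmult)

lemma nn_integral_exp_affine_minus_square: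
  fixes \<alpha> \<beta> :: real
  assumes a: "\<alpha> > 0"
  shows "(\<integral>\<^sup>+y. ennreal (exp (\<beta> * y - \<alpha> * y\<^sup>2)) \<partial>lborel) = ennreal (sqrt (pi / \<alpha>) * exp (\<beta>\<^sup>2 / (4 * \<alpha>)))"
proof -
  define C where "C = sqrt (pi / \<alpha>) * exp (\<beta>\<^sup>2 / (4 * \<alpha>))"
  define \<sigma> where "\<sigma> = 1 / sqrt (2 * \<alpha>)"
  have \<sigma>: "\<sigma> > 0" "\<sigma>\<^sup>2 = 1 / (2 * \<alpha>)" using a by (simp_all add: \<sigma>_def power_divide)
  have C: "C \<ge> 0" using a by (simp add: C_def)
  have density: "exp (\<beta> * y - \<alpha> * y\<^sup>2) = C * normal_density (\<beta> / (2 * \<alpha>)) \<sigma> y" for y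
  proof -
    have "exp (\<beta>\<^sup>2 / (4 * \<alpha>)) * exp (- (y - \<beta> / (2 * \<alpha>))\<^sup>2 / (2 * (1 / (2 * \<alpha>))))
        = exp (\<beta> * y - \<alpha> * y\<^sup>2)"
      unfolding exp_add[symmetric] using a by (simp add: field_simps power2_eq_square)
    moreover have "sqrt (2 * pi * (1 / (2 * \<alpha>))) = sqrt (pi / \<alpha>)" "sqrt (pi / \<alpha>) > 0"
      using a by simp_all
    ultimately show ?thesis unfolding C_def normal_density_def \<sigma>(2) using a by (simp add: field_simps)
  qed
  have "(\<integral>\<^sup>+y. ennreal (exp (\<beta> * y - \<alpha> * y\<^sup>2)) \<partial>lborel)
      = ennreal C * (\<integral>\<^sup>+y. ennreal (normal_density (\<beta> / (2 * \<alpha>)) \<sigma> y) \<partial>lborel)"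
    by (simp add: density ennreal_mult C nn_integral_cmult)
  also have "(\<integral>\<^sup>+y. ennreal (normal_density (\<beta> / (2 * \<alpha>)) \<sigma> y) \<partial>lborel) = 1"
    using integrable_normal_density[OF \<sigma>(1)] integral_normal_density[OF \<sigma>(1)]
    by (subst nn_integral_eq_integral) auto
  finally show ?thesis by (simp add: C_def)
qed

lemma power2_norm_eq_sum_Basis: "(norm (x::'a::euclidean_space))\<^sup>2 = (\<Sum>u\<in>Basis. (x \<bullet> u)\<^sup>2)"
  unfolding power2_norm_eq_inner by (subst euclidean_inner) (simp add: power2_eq_square)

lemma nn_integral_exp_inner_minus_square:
  fixes b :: "'a::euclidean_space" and \<alpha> :: real
  assumes a: "\<alpha> > 0"
  shows "(\<integral>\<^sup>+x. ennreal (exp (b \<bullet> x - \<alpha> * (norm x)\<^sup>2)) \<partial>lborel)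
     = ennreal (sqrt (pi / \<alpha>) ^ DIM('a) * exp ((norm b)\<^sup>2 / (4 * \<alpha>)))"
proof -
  interpret P: product_sigma_finite "\<lambda>_::'a. lborel :: real measure"
    by unfold_locales
  let ?T = "\<lambda>f::'a \<Rightarrow> real. \<Sum>u\<in>Basis. f u *\<^sub>R u"
  have coord: "?T f \<bullet> v = f v" if "v \<in> Basis" for f v
    using that by (simp add: inner_sum_left inner_Basis if_distrib cong: if_cong)
  have [measurable]: "?T \<in> (\<Pi>\<^sub>M b\<in>Basis. lborel) \<rightarrow>\<^sub>M borel" by measurable
  have "(\<integral>\<^sup>+x. ennreal (exp (b \<bullet> x - \<alpha> * (norm x)\<^sup>2)) \<partial>lborel)
    = (\<integral>\<^sup>+f. ennreal (exp (b \<bullet> ?T f - \<alpha> * (norm (?T f))\<^sup>2)) \<partial>(\<Pi>\<^sub>M b\<in>Basis. lborel))"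
    by (subst lborel_eq) (simp add: nn_integral_distr)
  also have "\<dots> = (\<integral>\<^sup>+f. (\<Prod>u\<in>Basis. ennreal (exp ((b \<bullet> u) * f u - \<alpha> * (f u)\<^sup>2))) \<partial>(\<Pi>\<^sub>M b\<in>Basis. lborel))"
  proof (intro nn_integral_cong)
    fix f :: "'a \<Rightarrow> real"
    have "b \<bullet> ?T f - \<alpha> * (norm (?T f))\<^sup>2 = (\<Sum>u\<in>Basis. (b \<bullet> u) * f u - \<alpha> * (f u)\<^sup>2)"
      by (simp add: power2_norm_eq_sum_Basis[of "?T f"] coord euclidean_inner[of b "?T f"]
            sum_subtractf sum_distrib_left)
    then show "ennreal (exp (b \<bullet> ?T f - \<alpha> * (norm (?T f))\<^sup>2))
        = (\<Prod>u\<in>Basis. ennreal (exp ((b \<bullet> u) * f u - \<alpha> * (f u)\<^sup>2)))"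
      by (simp add: exp_sum prod_ennreal)
  qed
  also have "\<dots> = (\<Prod>u\<in>Basis. \<integral>\<^sup>+y. ennreal (exp ((b \<bullet> u) * y - \<alpha> * y\<^sup>2)) \<partial>lborel)"
    by (rule P.product_nn_integral_prod) auto
  also have "\<dots> = ennreal (\<Prod>u\<in>Basis. sqrt (pi / \<alpha>) * exp ((b \<bullet> u)\<^sup>2 / (4 * \<alpha>)))"
    using a by (simp add: nn_integral_exp_affine_minus_square prod_ennreal)
  also have "(\<Prod>u\<in>Basis. sqrt (pi / \<alpha>) * exp ((b \<bullet> u)\<^sup>2 / (4 * \<alpha>)))
      = sqrt (pi / \<alpha>) ^ DIM('a) * exp ((norm b)\<^sup>2 / (4 * \<alpha>))"
    by (simp add: prod.distrib exp_sum[symmetric] power2_norm_eq_sum_Basis[of b] sum_divide_distrib)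
  finally show ?thesis .
qed

lemma nn_integral_exp_minus_scaled_square:
  "(\<integral>\<^sup>+(x::'a::euclidean_space). ennreal (exp (- \<alpha> * (norm x)\<^sup>2)) \<partial>lborel)
     = (if \<alpha> > 0 then ennreal (sqrt (pi / \<alpha>) ^ DIM('a)) else \<infinity>)"
proof (cases "\<alpha> > 0")
  case True
  then show ?thesis using nn_integral_exp_inner_minus_square[OF True, of "0::'a"] by simp
next
  case False
  have "(\<integral>\<^sup>+(x::'a). 1 \<partial>lborel) \<le> (\<integral>\<^sup>+(x::'a). ennreal (exp (- \<alpha> * (norm x)\<^sup>2)) \<partial>lborel)"
    using False by (intro nn_integral_mono) (simp add: mult_nonpos_nonneg)
  then show ?thesis using False by (simp add: top_unique)
qed

lemma ennreal_mean: "a \<ge> 0 \<Longrightarrow> b \<ge> 0 \<Longrightarrow> ennreal ((a + b) / 2) = inverse 2 * (ennreal a + ennreal b)"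
  by (subst divide_ennreal[symmetric]) (auto simp: divide_ennreal_def mult.commute)

lemma nn_integral_cosh_inner_gaussian:
  fixes t :: "'a::euclidean_space"
  shows "(\<integral>\<^sup>+x. ennreal (cosh (t \<bullet> x)) * ennreal (exp (- (norm x)\<^sup>2)) \<partial>lborel)
    = ennreal (sqrt pi ^ DIM('a) * exp ((norm t)\<^sup>2 / 4))"
proof -
  let ?G = "\<lambda>b. (\<integral>\<^sup>+x. ennreal (exp (b \<bullet> x - 1 * (norm x)\<^sup>2)) \<partial>lborel)"
  have G: "?G b = ennreal (sqrt pi ^ DIM('a) * exp ((norm t)\<^sup>2 / 4))" if "norm b = norm t" for b :: 'a
    using nn_integral_exp_inner_minus_square[of 1 b] that by simp
  have "(\<integral>\<^sup>+x. ennreal (cosh (t \<bullet> x)) * ennreal (exp (- (norm x)\<^sup>2)) \<partial>lborel)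
    = (\<integral>\<^sup>+x. inverse 2 * (ennreal (exp (t \<bullet> x - 1 * (norm x)\<^sup>2)) + ennreal (exp ((-t) \<bullet> x - 1 * (norm x)\<^sup>2))) \<partial>lborel)"
  proof (intro nn_integral_cong)
    fix x :: 'a
    have "cosh (t \<bullet> x) * exp (- (norm x)\<^sup>2)
        = (exp (t \<bullet> x - 1 * (norm x)\<^sup>2) + exp ((-t) \<bullet> x - 1 * (norm x)\<^sup>2)) / 2"
      by (simp add: cosh_def field_simps exp_diff exp_minus)
    then show "ennreal (cosh (t \<bullet> x)) * ennreal (exp (- (norm x)\<^sup>2))
      = inverse 2 * (ennreal (exp (t \<bullet> x - 1 * (norm x)\<^sup>2)) + ennreal (exp ((-t) \<bullet> x - 1 * (norm x)\<^sup>2)))"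
      by (simp only: ennreal_mean[symmetric] exp_ge_zero, simp add: ennreal_mult[symmetric])
  qed
  also have "\<dots> = inverse 2 * (?G t + ?G (-t))"
    by (simp add: nn_integral_cmult nn_integral_add)
  also have "\<dots> = ennreal (sqrt pi ^ DIM('a) * exp ((norm t)\<^sup>2 / 4))"
    by (simp only: G norm_minus_cancel, subst ennreal_mean[symmetric]) auto
  finally show ?thesis .
qed

section \<open>Integrals of homogeneous functions\<close>

lemma nn_integral_FTC_Icc_nonneg:
  fixes f F :: "real \<Rightarrow> real"
  assumes "a \<le> b" and "\<And>x. x \<in> {a..b} \<Longrightarrow> (F has_real_derivative f x) (at x)"
    and "\<And>x. x \<in> {a..b} \<Longrightarrow> 0 \<le> f x"
  shows "(\<integral>\<^sup>+x. ennreal (f x) * indicator {a..b} x \<partial>lborel) = ennreal (F b - F a)"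
proof (rule nn_integral_has_integral_lebesgue')
  show "(f has_integral F b - F a) {a..b}"
    using assms(1) by (intro fundamental_theorem_of_calculus)
      (auto intro!: has_field_derivative_at_within assms(2)
        simp: has_real_derivative_iff_has_vector_derivative[symmetric])
qed (use assms(3) in auto)

lemma pred_mem_cball[measurable]: "Measurable.pred borel (\<lambda>x. x \<in> cball (c::'a::euclidean_space) r)"
  unfolding mem_cball by measurable

lemma nn_integral_cball_homogeneous:
  fixes g :: "'a::euclidean_space \<Rightarrow> ennreal"
  assumes [measurable]: "g \<in> borel_measurable borel"
    and hom: "\<And>s x. s > 0 \<Longrightarrow> g (s *\<^sub>R x) = ennreal (s ^ d) * g x" and s: "s \<ge> 0"
  shows "(\<integral>\<^sup>+x. g x * indicator (cball 0 s) x \<partial>lborel)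
     = ennreal (s ^ (DIM('a) + d)) * (\<integral>\<^sup>+x. g x * indicator (cball 0 1) x \<partial>lborel)"
proof (cases "s = 0")
  case True
  have "AE x in lborel. g x * indicator (cball 0 s) x = 0"
    using AE_lborel_singleton[of 0] by eventually_elim (auto simp: True indicator_def)
  from nn_integral_cong_AE[OF this] show ?thesis using True by simp
next
  case False
  with s have s: "s > 0" by simp
  have "(\<integral>\<^sup>+x. g x * indicator (cball 0 s) x \<partial>lborel)
     = ennreal (\<bar>s\<bar> ^ DIM('a)) * (\<integral>\<^sup>+x. g (s *\<^sub>R x) * indicator (cball 0 s) (s *\<^sub>R x) \<partial>lborel)"
    using s by (intro nn_integral_lborel_scaleR) auto
  also have "(\<lambda>x. g (s *\<^sub>R x) * indicator (cball 0 s) (s *\<^sub>R x))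
      = (\<lambda>x. ennreal (s ^ d) * (g x * indicator (cball 0 1) x))"
    using s by (auto simp: hom indicator_def mult_le_cancel_left1)
  also have "ennreal (\<bar>s\<bar> ^ DIM('a)) * (\<integral>\<^sup>+x. ennreal (s ^ d) * (g x * indicator (cball 0 1) x) \<partial>lborel)
      = ennreal (s ^ (DIM('a) + d)) * (\<integral>\<^sup>+x. g x * indicator (cball 0 1) x \<partial>lborel)"
    using s by (subst nn_integral_cmult) (auto simp: mult.assoc[symmetric] ennreal_mult[symmetric] power_add)
  finally show ?thesis .
qed

definition half_gaussian_moment :: "nat \<Rightarrow> real" where
  "half_gaussian_moment m = (\<integral>x. indicator {0..} x *\<^sub>R (exp (- x\<^sup>2) * x ^ m) \<partial>lborel)"

lemma half_gaussian_moment_even: "half_gaussian_moment (2 * j) = sqrt pi / 2 * (fact (2 * j) / (2 ^ (2 * j) * fact j))"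
  and half_gaussian_moment_odd: "half_gaussian_moment (2 * j + 1) = fact j / 2"
  using has_bochner_integral_integral_eq[OF gaussian_moment_even_pos[of j]]
    has_bochner_integral_integral_eq[OF gaussian_moment_odd_pos[of j]]
  by (simp_all add: half_gaussian_moment_def)

lemma has_bochner_integral_half_gaussian_moment:
  "has_bochner_integral lborel (\<lambda>x. indicator {0..} x *\<^sub>R (exp (- x\<^sup>2) * x ^ m)) (half_gaussian_moment m)"
proof (cases "even m")
  case True
  then obtain j where "m = 2 * j" by (auto elim: evenE)
  then show ?thesis using gaussian_moment_even_pos[of j]
    by (simp add: half_gaussian_moment_def has_bochner_integral_iff)
next
  case False
  then obtain j where "m = 2 * j + 1" by (auto elim: oddE)
  then show ?thesis using gaussian_moment_odd_pos[of j]
    by (simp add: half_gaussian_moment_def has_bochner_integral_iff)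
qed

lemma half_gaussian_moment_pos: "half_gaussian_moment m > 0"
proof (cases "even m")
  case True
  then obtain j where "m = 2 * j" by (auto elim: evenE)
  then show ?thesis by (simp add: half_gaussian_moment_even)
next
  case False
  then obtain j where m: "m = 2 * j + 1" by (auto elim: oddE)
  show ?thesis unfolding m half_gaussian_moment_odd by simp
qed

lemma half_gaussian_moment_Suc_Suc:
  "half_gaussian_moment (m + 2) = (real m + 1) / 2 * half_gaussian_moment m"
proof (cases "even m")
  case True
  then obtain j where m: "m = 2 * j" by (auto elim: evenE)
  have e: "m + 2 = 2 * (j + 1)" using m by simp
  show ?thesis unfolding e unfolding m half_gaussian_moment_even
    by (simp add: field_simps fact_Suc power_add del: of_nat_Suc) (simp add: algebra_simps)
next
  case False
  then obtain j where m: "m = 2 * j + 1" by (auto elim: oddE)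
  have e: "m + 2 = 2 * (j + 1) + 1" using m by simp
  show ?thesis unfolding e unfolding m half_gaussian_moment_odd by (simp add: field_simps)
qed

lemma nn_integral_half_gaussian_moment:
  "(\<integral>\<^sup>+x. ennreal (exp (- x\<^sup>2) * x ^ m) * indicator {0..} x \<partial>lborel) = ennreal (half_gaussian_moment m)"
proof -
  have "(\<integral>\<^sup>+x. ennreal (exp (- x\<^sup>2) * x ^ m) * indicator {0..} x \<partial>lborel)
     = (\<integral>\<^sup>+x. ennreal (indicator {0..} x *\<^sub>R (exp (- x\<^sup>2) * x ^ m)) \<partial>lborel)"
    by (intro nn_integral_cong) (auto simp: indicator_def)
  also have "\<dots> = ennreal (half_gaussian_moment m)"
    using has_bochner_integral_half_gaussian_moment[of m]
    unfolding half_gaussian_moment_def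
    by (intro nn_integral_eq_integral) (auto simp: indicator_def has_bochner_integral_iff)
  finally show ?thesis .
qed

lemma ennreal_exp_minus_square_eq_nn_integral:
  assumes "a \<ge> 0"
  shows "ennreal (exp (- a\<^sup>2)) = (\<integral>\<^sup>+s. ennreal (2 * s * exp (- s\<^sup>2)) * indicator {a..} s \<partial>lborel)"
proof -
  have "((\<lambda>x::real. - exp (- x\<^sup>2)) \<longlongrightarrow> - 0) at_top"
    by (intro tendsto_minus filterlim_compose[OF exp_at_bot]
          filterlim_compose[OF filterlim_uminus_at_bot_at_top] filterlim_pow_at_top filterlim_ident) auto
  then have "(\<integral>\<^sup>+s. ennreal (2 * s * exp (- s\<^sup>2)) * indicator {a..} s \<partial>lborel) = ennreal (0 - (- exp (- a\<^sup>2)))"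
    using assms by (intro nn_integral_FTC_atLeast) (auto intro!: derivative_eq_intros)
  then show ?thesis by simp
qed

lemma nn_integral_homogeneous_gaussian:
  fixes g :: "'a::euclidean_space \<Rightarrow> ennreal"
  assumes [measurable]: "g \<in> borel_measurable borel"
    and hom: "\<And>s x. s > 0 \<Longrightarrow> g (s *\<^sub>R x) = ennreal (s ^ d) * g x"
  shows "(\<integral>\<^sup>+x. g x * ennreal (exp (- (norm x)\<^sup>2)) \<partial>lborel)
    = (\<integral>\<^sup>+x. g x * indicator (cball 0 1) x \<partial>lborel) * ennreal (2 * half_gaussian_moment (DIM('a) + d + 1))"
proof -
  define H where "H = (\<integral>\<^sup>+x. g x * indicator (cball 0 1) x \<partial>lborel)"
  define m where "m = DIM('a) + d + 1"
  have [measurable]: "Measurable.pred (borel \<Otimes>\<^sub>M borel) (\<lambda>x::'a \<times> real. snd x \<in> {norm (fst x)..})"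
    unfolding atLeast_iff by measurable
  have "(\<integral>\<^sup>+x. g x * ennreal (exp (- (norm x)\<^sup>2)) \<partial>lborel)
     = (\<integral>\<^sup>+x. \<integral>\<^sup>+s. g x * (ennreal (2 * s * exp (- s\<^sup>2)) * indicator {norm x..} s) \<partial>lborel \<partial>lborel)"
    by (intro nn_integral_cong) (simp add: ennreal_exp_minus_square_eq_nn_integral nn_integral_cmult)
  also have "\<dots> = (\<integral>\<^sup>+s. \<integral>\<^sup>+x. g x * (ennreal (2 * s * exp (- s\<^sup>2)) * indicator {norm x..} s) \<partial>lborel \<partial>lborel)"
    by (rule lborel_pair.Fubini'[symmetric]) measurable
  also have "\<dots> = (\<integral>\<^sup>+s. H * (ennreal (2 * (exp (- s\<^sup>2) * s ^ m)) * indicator {0..} s) \<partial>lborel)"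
  proof (intro nn_integral_cong)
    fix s :: real
    have "(\<integral>\<^sup>+x. g x * (ennreal (2 * s * exp (- s\<^sup>2)) * indicator {norm x..} s) \<partial>lborel)
       = (\<integral>\<^sup>+x. ennreal (2 * s * exp (- s\<^sup>2)) * (g x * indicator (cball 0 s) x) \<partial>lborel)"
      by (intro nn_integral_cong) (auto simp: indicator_def mult.commute)
    also have "\<dots> = ennreal (2 * s * exp (- s\<^sup>2)) * (\<integral>\<^sup>+x. g x * indicator (cball 0 s) x \<partial>lborel)"
      by (rule nn_integral_cmult) measurable
    also have "\<dots> = H * (ennreal (2 * (exp (- s\<^sup>2) * s ^ m)) * indicator {0..} s)"
    proof (cases "s \<ge> 0")
      case True
      have ball: "(\<integral>\<^sup>+x. g x * indicator (cball 0 s) x \<partial>lborel) = ennreal (s ^ (DIM('a) + d)) * H"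
        unfolding H_def by (rule nn_integral_cball_homogeneous[OF _ hom True]) measurable
      have weight: "ennreal (2 * s * exp (- s\<^sup>2)) * ennreal (s ^ (DIM('a) + d))
          = ennreal (2 * (exp (- s\<^sup>2) * s ^ m))"
        using True by (simp add: ennreal_mult[symmetric] m_def mult_ac)
      have "indicator {0..} s = (1::ennreal)" using True by simp
      then show ?thesis unfolding ball mult.assoc[symmetric] weight by (simp add: mult.commute)
    next
      case False
      then show ?thesis by (simp add: ennreal_neg mult_nonpos_nonneg)
    qed
    finally show "(\<integral>\<^sup>+x. g x * (ennreal (2 * s * exp (- s\<^sup>2)) * indicator {norm x..} s) \<partial>lborel)
       = H * (ennreal (2 * (exp (- s\<^sup>2) * s ^ m)) * indicator {0..} s)" .
  qed
  also have "\<dots> = H * (\<integral>\<^sup>+s. ennreal (2 * (exp (- s\<^sup>2) * s ^ m)) * indicator {0..} s \<partial>lborel)"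
    by (rule nn_integral_cmult) measurable
  also have "(\<integral>\<^sup>+s. ennreal (2 * (exp (- s\<^sup>2) * s ^ m)) * indicator {0..} s \<partial>lborel)
      = (\<integral>\<^sup>+s. 2 * (ennreal (exp (- s\<^sup>2) * s ^ m) * indicator {0..} s) \<partial>lborel)"
    by (intro nn_integral_cong) (auto simp: indicator_def numeral_mult_ennreal)
  also have "(\<integral>\<^sup>+s. 2 * (ennreal (exp (- s\<^sup>2) * s ^ m) * indicator {0..} s) \<partial>lborel)
      = ennreal (2 * half_gaussian_moment m)"
    by (simp add: nn_integral_cmult nn_integral_half_gaussian_moment numeral_mult_ennreal
        half_gaussian_moment_pos less_imp_le)
  finally show ?thesis by (simp add: H_def m_def)
qed

lemma nn_integral_cball_norm_power:
  fixes g :: "'a::euclidean_space \<Rightarrow> ennreal"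
  assumes [measurable]: "g \<in> borel_measurable borel"
    and hom: "\<And>s x. s > 0 \<Longrightarrow> g (s *\<^sub>R x) = g x"
    and fin: "(\<integral>\<^sup>+x. g x * indicator (cball 0 1) x \<partial>lborel) < \<infinity>"
  shows "(\<integral>\<^sup>+x. ennreal (norm x ^ m) * g x * indicator (cball 0 1) x \<partial>lborel)
     = (\<integral>\<^sup>+x. g x * indicator (cball 0 1) x \<partial>lborel) * ennreal (DIM('a) / (DIM('a) + m))"
    (is "?F = ?H * _")
proof -
  define N where "N = DIM('a)"
  define w where "w u = real m * u ^ (m - 1)" for u :: real
  have w: "0 \<le> u \<Longrightarrow> 0 \<le> w u" for u by (simp add: w_def)
  have [measurable]: "w \<in> borel_measurable borel" unfolding w_def[abs_def] by measurable
  have [measurable]: "Measurable.pred (borel \<Otimes>\<^sub>M borel) (\<lambda>x::real \<times> 'a. snd x \<in> cball 0 (fst x))"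
    unfolding mem_cball by measurable
  have [measurable]: "Measurable.pred (borel \<Otimes>\<^sub>M borel) (\<lambda>x::'a \<times> real. fst x \<in> cball 0 (snd x))"
    unfolding mem_cball by measurable
  have layer: "(\<integral>\<^sup>+u. ennreal (w u) * indicator {norm x..1} u \<partial>lborel) = ennreal (1 - norm x ^ m)"
    if "norm x \<le> 1" for x :: 'a
  proof -
    have "(\<integral>\<^sup>+u. ennreal (w u) * indicator {norm x..1} u \<partial>lborel) = ennreal (1 ^ m - norm x ^ m)"
    proof (rule nn_integral_FTC_Icc_nonneg)
      fix u assume u: "u \<in> {norm x..1}"
      show "((\<lambda>u. u ^ m) has_real_derivative w u) (at u)"
        unfolding w_def using DERIV_pow[of m u] by simp
      show "0 \<le> w u" using u w[of u] norm_ge_zero[of x] by simp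
    qed (use that in simp)
    then show ?thesis by simp
  qed
  \<comment> \<open>write \<open>1 - \<bar>x\<bar>\<^sup>m\<close> as an integral over radii \<open>u \<in> [\<bar>x\<bar>, 1]\<close>; by Fubini this integrates \<open>g\<close> over balls of radius \<open>u\<close>\<close>
  have decompose: "g x * indicator (cball 0 1) x = ennreal (norm x ^ m) * g x * indicator (cball 0 1) x
      + (\<integral>\<^sup>+u. ennreal (w u) * indicator {0..1} u * (g x * indicator (cball 0 u) x) \<partial>lborel)" for x :: 'a
  proof (cases "norm x \<le> 1")
    case True
    have "(\<integral>\<^sup>+u. ennreal (w u) * indicator {0..1} u * (g x * indicator (cball 0 u) x) \<partial>lborel)
        = (\<integral>\<^sup>+u. g x * (ennreal (w u) * indicator {norm x..1} u) \<partial>lborel)"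
      by (intro nn_integral_cong) (auto simp: indicator_def mult.commute dest: order_trans[OF norm_ge_zero])
    also have "\<dots> = g x * ennreal (1 - norm x ^ m)"
      using True by (simp add: nn_integral_cmult layer)
    finally show ?thesis
      using True by (simp add: power_le_one distrib_left[symmetric] ennreal_plus[symmetric] mult_ac
          del: ennreal_plus)
  next
    case False
    then have "(\<lambda>u. ennreal (w u) * indicator {0..1} u * (g x * indicator (cball 0 u) x)) = (\<lambda>u. 0)"
      by (auto simp: indicator_def)
    with False show ?thesis by simp
  qed
  have "?H = ?F + (\<integral>\<^sup>+x. \<integral>\<^sup>+u. ennreal (w u) * indicator {0..1} u * (g x * indicator (cball 0 u) x) \<partial>lborel \<partial>lborel)"
    unfolding decompose by (rule nn_integral_add) measurable
  also have "(\<integral>\<^sup>+x. \<integral>\<^sup>+u. ennreal (w u) * indicator {0..1} u * (g x * indicator (cball 0 u) x) \<partial>lborel \<partial>lborel)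
      = (\<integral>\<^sup>+u. ennreal (w u) * indicator {0..1} u * (\<integral>\<^sup>+x. g x * indicator (cball 0 u) x \<partial>lborel) \<partial>lborel)"
    by (subst lborel_pair.Fubini') (simp_all add: nn_integral_cmult)
  also have "\<dots> = (\<integral>\<^sup>+u. ?H * (ennreal (w u * u ^ N) * indicator {0..1} u) \<partial>lborel)"
  proof (intro nn_integral_cong)
    fix u :: real
    show "ennreal (w u) * indicator {0..1} u * (\<integral>\<^sup>+x. g x * indicator (cball 0 u) x \<partial>lborel)
        = ?H * (ennreal (w u * u ^ N) * indicator {0..1} u)"
    proof (cases "0 \<le> u \<and> u \<le> 1")
      case True
      have "(\<integral>\<^sup>+x. g x * indicator (cball 0 u) x \<partial>lborel) = ennreal (u ^ (N + 0)) * ?H"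
        unfolding N_def using True by (intro nn_integral_cball_homogeneous) (auto simp: hom)
      then show ?thesis using True w[of u] by (simp add: ennreal_mult mult_ac)
    qed (auto simp: indicator_def)
  qed
  also have "\<dots> = ?H * ennreal (m / (m + N))"
  proof -
    have "(\<integral>\<^sup>+u. ennreal (w u * u ^ N) * indicator {0..1} u \<partial>lborel)
        = ennreal (m / (m + N) * 1 ^ (m + N) - m / (m + N) * 0 ^ (m + N))"
    proof (rule nn_integral_FTC_Icc_nonneg)
      fix u :: real
      have "w u * u ^ N = m / (m + N) * ((m + N) * u ^ (m + N - 1))"
        by (cases m) (auto simp: w_def N_def power_add[symmetric] DIM_positive)
      then show "((\<lambda>u. m / (m + N) * u ^ (m + N)) has_real_derivative w u * u ^ N) (at u)"
        by (auto intro!: derivative_eq_intros)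
    qed (auto simp: w)
    then show ?thesis by (simp add: nn_integral_cmult N_def DIM_positive power_0_left)
  qed
  finally have "?F + ?H * ennreal (m / (m + N)) = ?H" ..
  also have "?H = ?H * ennreal (N / (N + m)) + ?H * ennreal (m / (m + N))"
  proof -
    have "real N / (N + m) + m / (m + N) = 1"
    proof -
      have "real N + m > 0" by (simp add: N_def add_pos_nonneg)
      then show ?thesis by (simp add: add_divide_distrib[symmetric] add.commute)
    qed
    then have "ennreal (N / (N + m)) + ennreal (m / (m + N)) = 1"
      by (subst ennreal_plus[symmetric]) auto
    then show ?thesis by (simp add: distrib_left[symmetric])
  qed
  finally have "?H * ennreal (m / (m + N)) + ?F = ?H * ennreal (m / (m + N)) + ?H * ennreal (N / (N + m))"
    by (simp add: add.commute)
  then show ?thesis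
    using fin by (auto simp: ennreal_add_left_cancel ennreal_mult_eq_top_iff N_def)
qed

section \<open>The uniform distribution on the sphere and its moments\<close>

lemma sets_uniform_sphere [simp]: "sets (uniform_sphere :: 'a::euclidean_space measure) = sets borel"
  by (simp add: uniform_sphere_def)

lemma borel_measurable_uniform_sphere:
  "f \<in> borel_measurable borel \<Longrightarrow> f \<in> borel_measurable (uniform_sphere :: 'a::euclidean_space measure)"
  by (simp add: measurable_cong_sets[OF sets_uniform_sphere refl])

lemma null_sets_sphere: "sphere (0::'a::euclidean_space) 1 \<in> null_sets lborel"
  using negligible_sphere[of "0::'a" 1]
  by (auto simp: null_sets_completion_iff negligible_iff_null_sets negligible_convex_frontier)

lemma unit_ball_vol_DIM_nonzero [simp]: "unit_ball_vol (real DIM('a::euclidean_space)) \<noteq> 0"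
  using unit_ball_vol_pos[of "real DIM('a)"] by linarith

lemma emeasure_punctured_ball:
  "emeasure lborel (ball (0::'a::euclidean_space) 1 - {0}) = ennreal (unit_ball_vol DIM('a))"
proof -
  have "emeasure lborel (ball (0::'a) 1 - {0}) = emeasure lborel (ball (0::'a) 1)"
    by (rule emeasure_Diff_null_set) auto
  then show ?thesis by (simp add: emeasure_ball)
qed

lemma prob_space_uniform_sphere: "prob_space (uniform_sphere :: 'a::euclidean_space measure)"
proof -
  have "prob_space (uniform_measure lborel (ball (0::'a) 1 - {0}))"
    by (intro prob_space_uniform_measure) (auto simp: emeasure_punctured_ball)
  then show ?thesis unfolding uniform_sphere_def
    by (rule prob_space.prob_space_distr) (auto simp: measurable_cong_sets[OF sets_uniform_measure refl])
qed

lemma nn_integral_uniform_sphere: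
  fixes f :: "'a::euclidean_space \<Rightarrow> ennreal"
  assumes [measurable]: "f \<in> borel_measurable borel"
  shows "(\<integral>\<^sup>+x. f x \<partial>uniform_sphere)
    = (\<integral>\<^sup>+x. f (x /\<^sub>R norm x) * indicator (cball 0 1) x \<partial>lborel) / ennreal (unit_ball_vol DIM('a))"
proof -
  let ?S = "ball (0::'a) 1 - {0}"
  have "(\<integral>\<^sup>+x. f x \<partial>uniform_sphere) = (\<integral>\<^sup>+x. f (x /\<^sub>R norm x) \<partial>uniform_measure lborel ?S)"
    unfolding uniform_sphere_def
    by (subst nn_integral_distr) (auto simp: measurable_cong_sets[OF sets_uniform_measure refl])
  also have "\<dots> = (\<integral>\<^sup>+x. f (x /\<^sub>R norm x) * indicator ?S x \<partial>lborel) / ennreal (unit_ball_vol DIM('a))"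
    by (subst nn_integral_uniform_measure) (auto simp: emeasure_punctured_ball)
  also have "(\<integral>\<^sup>+x. f (x /\<^sub>R norm x) * indicator ?S x \<partial>lborel)
      = (\<integral>\<^sup>+x. f (x /\<^sub>R norm x) * indicator (cball 0 1) x \<partial>lborel)"
  proof (rule nn_integral_cong_AE)
    show "AE x in lborel. f (x /\<^sub>R norm x) * indicator ?S x = f (x /\<^sub>R norm x) * indicator (cball 0 1) x"
      using AE_not_in[OF null_sets_sphere] AE_lborel_singleton[of 0]
      by eventually_elim (auto simp: indicator_def)
  qed
  finally show ?thesis .
qed

lemma nn_integral_uniform_sphere_uminus:
  fixes f :: "'a::euclidean_space \<Rightarrow> ennreal"
  assumes [measurable]: "f \<in> borel_measurable borel"
  shows "(\<integral>\<^sup>+x. f (- x) \<partial>uniform_sphere) = (\<integral>\<^sup>+x. f x \<partial>uniform_sphere)"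
proof -
  have "(\<integral>\<^sup>+x. f (x /\<^sub>R norm x) * indicator (cball 0 1) x \<partial>lborel)
     = ennreal (\<bar>-1\<bar> ^ DIM('a)) * (\<integral>\<^sup>+x. f (((-1) *\<^sub>R x) /\<^sub>R norm ((-1) *\<^sub>R x)) * indicator (cball 0 1) ((-1) *\<^sub>R x) \<partial>lborel)"
    by (rule nn_integral_lborel_scaleR) measurable
  also have "\<dots> = (\<integral>\<^sup>+x. f (- (x /\<^sub>R norm x)) * indicator (cball 0 1) x \<partial>lborel)"
    by (simp add: indicator_def)
  finally show ?thesis by (simp add: nn_integral_uniform_sphere)
qed

definition sphere_moment :: "nat \<Rightarrow> 'a::euclidean_space \<Rightarrow> ennreal" where
  "sphere_moment k t = (\<integral>\<^sup>+x. ennreal ((t \<bullet> x) ^ (2 * k)) \<partial>uniform_sphere)"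

lemma sphere_moment_0 [simp]: "sphere_moment 0 t = 1"
proof -
  interpret prob_space "uniform_sphere :: 'a measure" by (rule prob_space_uniform_sphere)
  show ?thesis by (simp add: sphere_moment_def emeasure_space_1)
qed

lemma sphere_moment_scaleR: "sphere_moment k (c *\<^sub>R t) = ennreal (c ^ (2 * k)) * sphere_moment k t"
proof -
  have "sphere_moment k (c *\<^sub>R t) = (\<integral>\<^sup>+x. ennreal (c ^ (2 * k)) * ennreal ((t \<bullet> x) ^ (2 * k)) \<partial>uniform_sphere)"
    unfolding sphere_moment_def
    by (intro nn_integral_cong) (simp add: ennreal_mult'[symmetric] power_mult power_mult_distrib)
  also have "\<dots> = ennreal (c ^ (2 * k)) * sphere_moment k t"
    unfolding sphere_moment_def by (intro nn_integral_cmult borel_measurable_uniform_sphere) measurable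
  finally show ?thesis .
qed

lemma nn_integral_cball_inner_power:
  fixes t :: "'a::euclidean_space"
  shows "(\<integral>\<^sup>+x. ennreal ((t \<bullet> x) ^ (2 * k)) * indicator (cball 0 1) x \<partial>lborel)
    = sphere_moment k t * ennreal (unit_ball_vol DIM('a) * (real DIM('a) / (real DIM('a) + 2 * real k)))"
proof -
  define g where "g x = ennreal ((t \<bullet> (x /\<^sub>R norm x)) ^ (2 * k))" for x :: 'a
  let ?V = "ennreal (unit_ball_vol DIM('a))"
  have V: "?V \<noteq> 0" "?V \<noteq> \<infinity>" by auto
  have [measurable]: "g \<in> borel_measurable borel" unfolding g_def[abs_def] by measurable
  have ball: "(\<integral>\<^sup>+x. g x * indicator (cball 0 1) x \<partial>lborel) = sphere_moment k t * ?V"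
    using V unfolding sphere_moment_def g_def
    by (subst nn_integral_uniform_sphere) (simp_all add: ennreal_divide_times)
  have "(\<integral>\<^sup>+x. ennreal ((t \<bullet> x) ^ (2 * k)) * indicator (cball 0 1) x \<partial>lborel)
      = (\<integral>\<^sup>+x. ennreal (norm x ^ (2 * k)) * g x * indicator (cball 0 1) x \<partial>lborel)"
  proof (intro nn_integral_cong)
    fix x :: 'a
    have "(t \<bullet> x) ^ (2 * k) = norm x ^ (2 * k) * (t \<bullet> (x /\<^sub>R norm x)) ^ (2 * k)"
    proof (cases "x = 0")
      case False
      then have "t \<bullet> (x /\<^sub>R norm x) = (t \<bullet> x) / norm x" by (simp add: divide_inverse)
      then show ?thesis using False by (simp add: power_divide)
    qed (cases k, auto)
    then show "ennreal ((t \<bullet> x) ^ (2 * k)) * indicator (cball 0 1) x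
        = ennreal (norm x ^ (2 * k)) * g x * indicator (cball 0 1) x"
      by (simp add: g_def ennreal_mult power_mult)
  qed
  also have "\<dots> = (\<integral>\<^sup>+x. g x * indicator (cball 0 1) x \<partial>lborel) * ennreal (DIM('a) / (DIM('a) + 2 * k))"
  proof (rule nn_integral_cball_norm_power)
    show "g (s *\<^sub>R x) = g x" if "s > 0" for s and x :: 'a
      using that by (cases "x = 0") (simp_all add: g_def field_simps)
    have "g x \<le> ennreal (norm t ^ (2 * k))" for x
    proof -
      have "\<bar>t \<bullet> (x /\<^sub>R norm x)\<bar> \<le> norm t * norm (x /\<^sub>R norm x)" by (rule Cauchy_Schwarz_ineq2)
      also have "\<dots> \<le> norm t" by (cases "x = 0") auto
      finally have "\<bar>t \<bullet> (x /\<^sub>R norm x)\<bar> ^ (2 * k) \<le> norm t ^ (2 * k)"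
        by (intro power_mono) auto
      then show ?thesis unfolding g_def by (intro ennreal_leI) (simp add: power_even_abs)
    qed
    then have "(\<integral>\<^sup>+x. g x * indicator (cball 0 1) x \<partial>lborel)
        \<le> (\<integral>\<^sup>+x. ennreal (norm t ^ (2 * k)) * indicator (cball (0::'a) 1) x \<partial>lborel)"
      by (intro nn_integral_mono mult_right_mono) auto
    also have "\<dots> = ennreal (norm t ^ (2 * k)) * emeasure lborel (cball (0::'a) 1)"
      by (rule nn_integral_cmult_indicator) simp
    also have "\<dots> < \<infinity>"
      using emeasure_lborel_cball_finite[of "0::'a" 1] by (simp add: ennreal_mult_less_top)
    finally show "(\<integral>\<^sup>+x. g x * indicator (cball 0 1) x \<partial>lborel) < \<infinity>" .
  qed simp
  finally show ?thesis
    by (simp add: ball mult.assoc ennreal_mult[symmetric] less_imp_le[OF unit_ball_vol_pos])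
qed

lemma half_gaussian_moment_ratio:
  assumes "n > 0"
  shows "real n / (real n + 2 * real k) * half_gaussian_moment (n + 2 * k + 1)
    = half_gaussian_moment (n + 1) * pochhammer (real n / 2) k"
proof (induction k)
  case (Suc k)
  have e: "n + 2 * Suc k + 1 = (n + 2 * k + 1) + 2" by simp
  have "real n / (real n + 2 * real (Suc k)) * half_gaussian_moment (n + 2 * Suc k + 1)
      = n / (n + 2 * k + 2) * ((real (n + 2 * k + 1) + 1) / 2 * half_gaussian_moment (n + 2 * k + 1))"
    unfolding e half_gaussian_moment_Suc_Suc by (simp add: algebra_simps)
  also have "\<dots> = (n / 2 + k) * (real n / (real n + 2 * real k) * half_gaussian_moment (n + 2 * k + 1))"
    using assms by (simp add: field_simps)
  also have "\<dots> = (n / 2 + k) * (half_gaussian_moment (n + 1) * pochhammer (n / 2) k)"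
    by (simp only: Suc.IH)
  finally show ?case by (simp add: pochhammer_Suc mult_ac)
qed (use assms in simp)

lemma nn_integral_inner_power_gaussian_unit_ball_vol:
  fixes t :: "'a::euclidean_space"
  shows "(\<integral>\<^sup>+x. ennreal ((t \<bullet> x) ^ (2 * k)) * ennreal (exp (- (norm x)\<^sup>2)) \<partial>lborel)
    = sphere_moment k t * ennreal (2 * unit_ball_vol DIM('a) * half_gaussian_moment (DIM('a) + 1) * pochhammer (DIM('a) / 2) k)"
proof -
  have "(\<integral>\<^sup>+x. ennreal ((t \<bullet> x) ^ (2 * k)) * ennreal (exp (- (norm x)\<^sup>2)) \<partial>lborel)
     = (\<integral>\<^sup>+x. ennreal ((t \<bullet> x) ^ (2 * k)) * indicator (cball 0 1) x \<partial>lborel)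
       * ennreal (2 * half_gaussian_moment (DIM('a) + 2 * k + 1))"
    by (rule nn_integral_homogeneous_gaussian)
       (auto simp: power_mult_distrib ennreal_mult' power_mult[symmetric])
  also have "\<dots> = sphere_moment k t * ennreal (unit_ball_vol DIM('a) * (real DIM('a) / (real DIM('a) + 2 * real k)))
       * ennreal (2 * half_gaussian_moment (DIM('a) + 2 * k + 1))"
    by (simp only: nn_integral_cball_inner_power)
  also have "\<dots> = sphere_moment k t * ennreal (2 * unit_ball_vol DIM('a)
      * (real DIM('a) / (real DIM('a) + 2 * real k) * half_gaussian_moment (DIM('a) + 2 * k + 1)))"
    by (subst mult.assoc, subst ennreal_mult'[symmetric])
       (simp_all add: less_imp_le[OF unit_ball_vol_pos] mult_ac)
  finally show ?thesis
    unfolding half_gaussian_moment_ratio[OF DIM_positive] by (simp add: mult.assoc)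
qed

text \<open>The case \<open>k = 0\<close> compared with the Gaussian integral; this avoids the closed form of the
  volume of the unit ball.\<close>

lemma unit_ball_vol_half_gaussian_moment:
  "2 * unit_ball_vol DIM('a::euclidean_space) * half_gaussian_moment (DIM('a) + 1) = sqrt pi ^ DIM('a)"
proof -
  have "ennreal (2 * unit_ball_vol DIM('a) * half_gaussian_moment (DIM('a) + 1))
      = (\<integral>\<^sup>+(x::'a). ennreal (exp ((0::'a) \<bullet> x - 1 * (norm x)\<^sup>2)) \<partial>lborel)"
    using nn_integral_inner_power_gaussian_unit_ball_vol[of "0::'a" 0] by simp
  also have "\<dots> = ennreal (sqrt pi ^ DIM('a))"
    by (subst nn_integral_exp_inner_minus_square) simp_all
  finally show ?thesis
    using half_gaussian_moment_pos[of "DIM('a) + 1"] unit_ball_vol_pos[of "real DIM('a)"]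
    by (subst (asm) ennreal_inj) auto
qed

lemma nn_integral_inner_power_gaussian:
  fixes t :: "'a::euclidean_space"
  shows "(\<integral>\<^sup>+x. ennreal ((t \<bullet> x) ^ (2 * k)) * ennreal (exp (- (norm x)\<^sup>2)) \<partial>lborel)
    = sphere_moment k t * ennreal (sqrt pi ^ DIM('a) * pochhammer (DIM('a) / 2) k)"
  using nn_integral_inner_power_gaussian_unit_ball_vol[of t k] unit_ball_vol_half_gaussian_moment[where 'a='a]
  by simp

lemma cosh_sums_even_powers: "(\<lambda>k. y ^ (2 * k) / fact (2 * k)) sums cosh (y::real)"
proof -
  have "(\<lambda>n. if even n then y ^ n /\<^sub>R fact n else 0) = (\<lambda>n. if even n then y ^ (2 * (n div 2)) / fact (2 * (n div 2)) else 0)"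
    by (rule ext) (auto elim!: evenE simp: divide_inverse mult.commute)
  with cosh_converges[of y]
  have "(\<lambda>n. if even n then y ^ (2 * (n div 2)) / fact (2 * (n div 2)) else 0) sums cosh y" by simp
  from LIMSEQ_linear[OF this[unfolded sums_def] pos2, simplified sum_split_even_odd[simplified mult.commute]]
  show ?thesis unfolding sums_def by auto
qed

lemma ennreal_cosh_suminf: "ennreal (cosh (y::real)) = (\<Sum>k. ennreal (y ^ (2 * k) / fact (2 * k)))"
  using cosh_sums_even_powers[of y]
  by (subst suminf_ennreal2) (auto simp: sums_iff power_mult)

text \<open>Both sides are \<open>\<pi>^(-N/2) \<integral> cosh(t\<bullet>x) exp(-\<bar>x\<bar>\<^sup>2) dx\<close>: on the right in closed form, on the
  left expanded termwise with the previous lemma.\<close>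

lemma sphere_moment_series:
  fixes t :: "'a::euclidean_space"
  shows "(\<Sum>k. sphere_moment k t * ennreal (pochhammer (DIM('a) / 2) k / fact (2 * k))) = ennreal (exp ((norm t)\<^sup>2 / 4))"
proof -
  define c where "c = sqrt pi ^ DIM('a)"
  have c: "c > 0" by (simp add: c_def)
  let ?f = "\<lambda>k x. ennreal ((t \<bullet> x) ^ (2 * k) / fact (2 * k)) * ennreal (exp (- (norm x)\<^sup>2))"
  have "ennreal c * (\<Sum>k. sphere_moment k t * ennreal (pochhammer (DIM('a) / 2) k / fact (2 * k)))
      = (\<Sum>k. ennreal c * (sphere_moment k t * ennreal (pochhammer (DIM('a) / 2) k / fact (2 * k))))"
    by (rule ennreal_suminf_cmult[symmetric])
  also have "\<dots> = (\<Sum>k. \<integral>\<^sup>+x. ?f k x \<partial>lborel)"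
  proof (intro suminf_cong)
    fix k
    have "(\<integral>\<^sup>+x. ?f k x \<partial>lborel)
        = (\<integral>\<^sup>+x. ennreal (1 / fact (2 * k)) * (ennreal ((t \<bullet> x) ^ (2 * k)) * ennreal (exp (- (norm x)\<^sup>2))) \<partial>lborel)"
      by (intro nn_integral_cong) (simp add: ennreal_mult'[symmetric] power_mult)
    also have "\<dots> = ennreal (1 / fact (2 * k)) * (sphere_moment k t * ennreal (c * pochhammer (DIM('a) / 2) k))"
      by (subst nn_integral_cmult) (simp_all add: nn_integral_inner_power_gaussian c_def)
    also have "\<dots> = ennreal c * (sphere_moment k t * ennreal (pochhammer (DIM('a) / 2) k / fact (2 * k)))"
    proof -
      have "ennreal (1 / fact (2 * k)) * ennreal (c * pochhammer (DIM('a) / 2) k)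
          = ennreal c * ennreal (pochhammer (DIM('a) / 2) k / fact (2 * k))"
        using c by (simp add: ennreal_mult'[symmetric] pochhammer_pos)
      then show ?thesis by (metis mult.left_commute)
    qed
    finally show "ennreal c * (sphere_moment k t * ennreal (pochhammer (DIM('a) / 2) k / fact (2 * k)))
        = (\<integral>\<^sup>+x. ?f k x \<partial>lborel)" ..
  qed
  also have "\<dots> = (\<integral>\<^sup>+x. (\<Sum>k. ?f k x) \<partial>lborel)"
    by (rule nn_integral_suminf[symmetric]) measurable
  also have "\<dots> = (\<integral>\<^sup>+x. ennreal (cosh (t \<bullet> x)) * ennreal (exp (- (norm x)\<^sup>2)) \<partial>lborel)"
    by (simp add: ennreal_cosh_suminf ennreal_suminf_multc)
  also have "\<dots> = ennreal c * ennreal (exp ((norm t)\<^sup>2 / 4))"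
    using c by (simp add: nn_integral_cosh_inner_gaussian c_def ennreal_mult)
  finally show ?thesis using c by (simp add: ennreal_mult_cancel_left)
qed

section \<open>The moment generating function of the uniform distribution on the sphere\<close>

definition sphere_mgf :: "'a::euclidean_space \<Rightarrow> ennreal" where
  "sphere_mgf s = (\<integral>\<^sup>+x. ennreal (exp (s \<bullet> x)) \<partial>uniform_sphere)"

lemma borel_measurable_sphere_mgf [measurable]: "sphere_mgf \<in> borel_measurable (borel :: 'a::euclidean_space measure)"
proof -
  interpret sigma_finite_measure "uniform_sphere :: 'a measure"
    using prob_space_uniform_sphere prob_space_imp_sigma_finite by blast
  have "(\<lambda>(s::'a, x::'a). ennreal (exp (s \<bullet> x))) \<in> borel_measurable (borel \<Otimes>\<^sub>M uniform_sphere)"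
    by (subst measurable_cong_sets[OF sets_pair_measure_cong[OF refl sets_uniform_sphere] refl]) measurable
  then show ?thesis unfolding sphere_mgf_def[abs_def] by (rule borel_measurable_nn_integral)
qed

lemma sphere_mgf_eq_cosh: "sphere_mgf s = (\<integral>\<^sup>+x. ennreal (cosh (s \<bullet> x)) \<partial>uniform_sphere)"
proof -
  have "(\<integral>\<^sup>+x. ennreal (cosh (s \<bullet> x)) \<partial>uniform_sphere)
      = (\<integral>\<^sup>+x. inverse 2 * (ennreal (exp (s \<bullet> x)) + ennreal (exp (s \<bullet> (- x)))) \<partial>uniform_sphere)"
    by (intro nn_integral_cong) (simp add: cosh_def ennreal_mean[symmetric])
  also have "\<dots> = inverse 2 * (sphere_mgf s + (\<integral>\<^sup>+x. ennreal (exp (s \<bullet> (- x))) \<partial>uniform_sphere))"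
  proof -
    have "(\<lambda>x. ennreal (exp (s \<bullet> x))) \<in> borel_measurable uniform_sphere"
      "(\<lambda>x. ennreal (exp (s \<bullet> (- x)))) \<in> borel_measurable uniform_sphere"
      by (intro borel_measurable_uniform_sphere, measurable)+
    then show ?thesis unfolding sphere_mgf_def by (simp add: nn_integral_cmult nn_integral_add)
  qed
  also have "(\<integral>\<^sup>+x. ennreal (exp (s \<bullet> (- x))) \<partial>uniform_sphere) = sphere_mgf s"
    unfolding sphere_mgf_def by (rule nn_integral_uniform_sphere_uminus) measurable
  also have "inverse 2 * (sphere_mgf s + sphere_mgf s) = sphere_mgf s"
  proof -
    have "inverse (2::ennreal) * 2 = 1"
      using ennreal_divide_self[of 2] by (simp add: divide_ennreal_def mult.commute)
    then show ?thesis by (simp add: mult_2[symmetric] mult.assoc[symmetric] del: mult_2)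
  qed
  finally show ?thesis ..
qed

lemma sphere_mgf_series: "sphere_mgf s = (\<Sum>k. sphere_moment k s * ennreal (1 / fact (2 * k)))"
proof -
  have "sphere_mgf s = (\<integral>\<^sup>+x. (\<Sum>k. ennreal (1 / fact (2 * k)) * ennreal ((s \<bullet> x) ^ (2 * k))) \<partial>uniform_sphere)"
    unfolding sphere_mgf_eq_cosh ennreal_cosh_suminf
    by (intro nn_integral_cong suminf_cong) (simp add: ennreal_mult'[symmetric])
  also have "\<dots> = (\<Sum>k. \<integral>\<^sup>+x. ennreal (1 / fact (2 * k)) * ennreal ((s \<bullet> x) ^ (2 * k)) \<partial>uniform_sphere)"
    by (rule nn_integral_suminf) (intro borel_measurable_uniform_sphere, measurable)
  also have "\<dots> = (\<Sum>k. sphere_moment k s * ennreal (1 / fact (2 * k)))"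
    unfolding sphere_moment_def
    by (intro suminf_cong, subst nn_integral_cmult)
       (intro borel_measurable_uniform_sphere, measurable, simp add: mult.commute)
  finally show ?thesis .
qed

lemma pochhammer_ge_power: "(x::real) \<ge> 0 \<Longrightarrow> pochhammer x k \<ge> x ^ k"
proof (induction k)
  case (Suc k)
  have "x ^ Suc k = x ^ k * x" by simp
  also have "\<dots> \<le> pochhammer x k * (x + real k)"
    using Suc by (intro mult_mono) (auto intro: order_trans[OF zero_le_power])
  finally show ?case by (simp add: pochhammer_Suc)
qed simp

text \<open>Since \<open>(N/2)\<^sub>k \<ge> (N/2)\<^sup>k\<close>, the series of \<open>sphere_mgf_series\<close> is dominated termwise by the
  series of \<open>sphere_moment_series\<close> at a rescaled argument.\<close>

lemma sphere_mgf_le: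
  fixes s :: "'a::euclidean_space"
  shows "sphere_mgf s \<le> ennreal (exp ((norm s)\<^sup>2 / (2 * DIM('a))))"
proof -
  define N where "N = real DIM('a)"
  have N: "N > 0" by (simp add: N_def)
  define a where "a = sqrt (2 / N)"
  have a2: "a\<^sup>2 = 2 / N" using N by (simp add: a_def)
  have "sphere_mgf s = (\<Sum>k. sphere_moment k s * ennreal (1 / fact (2 * k)))" by (rule sphere_mgf_series)
  also have "\<dots> \<le> (\<Sum>k. sphere_moment k (a *\<^sub>R s) * ennreal (pochhammer (DIM('a) / 2) k / fact (2 * k)))"
  proof (intro suminf_le summableI)
    fix k
    have "1 = (2 / N) ^ k * (N / 2) ^ k" using N by (simp add: power_mult_distrib[symmetric])
    also have "\<dots> \<le> (2 / N) ^ k * pochhammer (N / 2) k"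
      using N pochhammer_ge_power[of "N / 2" k] by (intro mult_left_mono) auto
    finally have "1 \<le> a ^ (2 * k) * pochhammer (N / 2) k" by (simp add: power_mult a2)
    then have "ennreal (1 / fact (2 * k)) \<le> ennreal (a ^ (2 * k)) * ennreal (pochhammer (N / 2) k / fact (2 * k))"
      by (simp add: ennreal_mult'[symmetric] power_mult ennreal_leI divide_right_mono)
    then show "sphere_moment k s * ennreal (1 / fact (2 * k))
        \<le> sphere_moment k (a *\<^sub>R s) * ennreal (pochhammer (DIM('a) / 2) k / fact (2 * k))"
      by (simp add: sphere_moment_scaleR N_def mult_left_mono mult.assoc mult.left_commute)
  qed
  also have "\<dots> = ennreal (exp ((norm (a *\<^sub>R s))\<^sup>2 / 4))" by (rule sphere_moment_series)
  also have "(norm (a *\<^sub>R s))\<^sup>2 / 4 = (norm s)\<^sup>2 / (2 * DIM('a))"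
    using N by (simp add: power_mult_distrib a2 N_def)
  finally show ?thesis .
qed

lemma power_series_exp_coefficient_1_ge:
  fixes r :: "nat \<Rightarrow> real" and A :: real
  assumes r: "\<And>k. r k \<ge> 0" and r0: "r 0 = 1"
    and sums: "\<And>x. 0 \<le> x \<Longrightarrow> x \<le> 1 \<Longrightarrow> (\<lambda>k. r k * x ^ k) sums exp (A * x)"
  shows "A \<le> r 1"
proof (rule field_le_epsilon)
  fix e :: real assume e: "e > 0"
  define x where "x = min 1 (e / exp A)"
  have x: "0 < x" "x \<le> 1" "x * exp A \<le> e"
    using e by (auto simp: x_def min_def field_simps)
  define d where "d k = (if k = 0 then r 0 else 0) + (if k = 1 then r 1 * x else 0) + x\<^sup>2 * r k" for k
  have d: "d sums (r 0 + r 1 * x + x\<^sup>2 * exp A)"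
    unfolding d_def using sums[of 1]
    by (intro sums_add sums_mult sums_single[of 0] sums_single[of 1]) simp_all
  have "exp (A * x) \<le> r 0 + r 1 * x + x\<^sup>2 * exp A"
  proof (rule sums_le[OF _ sums[OF less_imp_le[OF x(1)] x(2)] d])
    show "r k * x ^ k \<le> d k" for k
    proof (cases "k \<le> 1")
      case True
      then have "k = 0 \<or> k = 1" by auto
      then show ?thesis using r[of k] x by (auto simp: d_def)
    next
      case False
      then have "x ^ k \<le> x\<^sup>2" using x by (intro power_decreasing) auto
      then show ?thesis using False r[of k] by (simp add: d_def mult_left_mono mult.commute)
    qed
  qed
  moreover have "1 + A * x \<le> exp (A * x)" by (rule exp_ge_add_one_self)
  moreover have "x * (r 1 + x * exp A) = r 1 * x + x\<^sup>2 * exp A"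
    by (simp add: algebra_simps power2_eq_square)
  ultimately have "x * A \<le> x * (r 1 + x * exp A)"
    using r0 by (simp only: mult.commute[of x A])
  then have "A \<le> r 1 + x * exp A" using x(1) by (simp add: mult_le_cancel_left_pos)
  then show "A \<le> r 1 + e" using x(3) by linarith
qed

lemma sphere_moment_1_ge:
  fixes s :: "'a::euclidean_space"
  shows "sphere_moment 1 s \<ge> ennreal ((norm s)\<^sup>2 / DIM('a))"
proof -
  define c where "c k = pochhammer (DIM('a) / 2) k / fact (2 * k)" for k
  have c: "c k > 0" for k by (simp add: c_def pochhammer_pos)
  have fin: "sphere_moment k s \<noteq> \<infinity>" for k
  proof
    assume "sphere_moment k s = \<infinity>"
    then have "\<infinity> = sphere_moment k s * ennreal (c k)" using c[of k] by (simp add: ennreal_mult_top)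
    also have "\<dots> \<le> (\<Sum>k. sphere_moment k s * ennreal (c k))"
      using sum_le_suminf[of "\<lambda>k. sphere_moment k s * ennreal (c k)" "{k}"] by simp
    also have "\<dots> = ennreal (exp ((norm s)\<^sup>2 / 4))" unfolding c_def by (rule sphere_moment_series)
    finally show False by (simp add: top_unique)
  qed
  define \<mu> where "\<mu> k = enn2real (sphere_moment k s)" for k
  have \<mu>: "sphere_moment k s = ennreal (\<mu> k)" "\<mu> k \<ge> 0" for k
    using fin[of k] by (simp_all add: \<mu>_def ennreal_enn2real less_top)
  have "(norm s)\<^sup>2 / 4 \<le> \<mu> 1 * c 1"
  proof (rule power_series_exp_coefficient_1_ge)
    show "\<mu> k * c k \<ge> 0" for k using \<mu>(2)[of k] c[of k] by simp
    show "\<mu> 0 * c 0 = 1" using \<mu>(1)[of 0] by (simp add: c_def)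
    show "(\<lambda>k. \<mu> k * c k * x ^ k) sums exp ((norm s)\<^sup>2 / 4 * x)" if x: "0 \<le> x" for x
    proof -
      have "ennreal (\<mu> k * c k * x ^ k) = sphere_moment k (sqrt x *\<^sub>R s) * ennreal (c k)" for k
      proof -
        have "sphere_moment k (sqrt x *\<^sub>R s) = ennreal (\<mu> k * x ^ k)"
        proof -
          have "sqrt x ^ (2 * k) = x ^ k" using x by (simp add: power_mult)
          then show ?thesis using x \<mu>(2)[of k] by (simp add: sphere_moment_scaleR \<mu>(1) ennreal_mult' mult.commute)
        qed
        then show ?thesis using x \<mu>(2)[of k] c[of k] by (simp add: ennreal_mult'[symmetric] mult_ac)
      qed
      then have "(\<Sum>k. ennreal (\<mu> k * c k * x ^ k)) = ennreal (exp ((norm s)\<^sup>2 / 4 * x))"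
        using sphere_moment_series[of "sqrt x *\<^sub>R s"] x by (simp add: c_def power_mult_distrib)
      then show ?thesis
        using summable_sums[OF summableI, of "\<lambda>k. ennreal (\<mu> k * c k * x ^ k)"] x \<mu>(2) c
        by (simp add: less_imp_le)
    qed
  qed
  then have "(norm s)\<^sup>2 / DIM('a) \<le> \<mu> 1" by (simp add: c_def field_simps)
  then show ?thesis by (simp add: \<mu>(1) ennreal_leI)
qed

lemma sphere_mgf_ge:
  fixes s :: "'a::euclidean_space"
  shows "sphere_mgf s \<ge> ennreal (1 + (norm s)\<^sup>2 / (2 * DIM('a)))"
proof -
  have "ennreal (1 + (norm s)\<^sup>2 / (2 * DIM('a))) = 1 + ennreal ((norm s)\<^sup>2 / DIM('a)) * ennreal (1 / 2)"
  proof -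
    have "ennreal ((norm s)\<^sup>2 / DIM('a)) * ennreal (1 / 2) = ennreal ((norm s)\<^sup>2 / DIM('a) * (1 / 2))"
      by (rule ennreal_mult'[symmetric]) simp
    also have "(norm s)\<^sup>2 / DIM('a) * (1 / 2) = (norm s)\<^sup>2 / (2 * DIM('a))" by simp
    finally show ?thesis by (simp add: ennreal_plus)
  qed
  also have "\<dots> \<le> (\<Sum>k\<in>{0, 1}. sphere_moment k s * ennreal (1 / fact (2 * k)))"
    using sphere_moment_1_ge[of s] by (simp add: mult_right_mono)
  also have "\<dots> \<le> sphere_mgf s"
    unfolding sphere_mgf_series by (rule sum_le_suminf) auto
  finally show ?thesis .
qed

section \<open>The \<open>\<psi>\<^sub>2\<close>-integral of the Gaussian\<close>

definition psi2_integral :: "'a measure \<Rightarrow> ('a \<Rightarrow> 'b::real_normed_vector) \<Rightarrow> real \<Rightarrow> ennreal" where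
  "psi2_integral M Y c = (\<integral>\<^sup>+\<omega>. ennreal (exp ((norm (Y \<omega>))\<^sup>2 / c\<^sup>2)) \<partial>M)"

lemma psi2_norm_eq_Inf: "psi2_norm M Y = Inf {c. c > 0 \<and> psi2_integral M Y c \<le> 2}"
  by (simp add: psi2_norm_def psi2_integral_def)

lemma psi2_integral_antimono:
  assumes "0 < c'" "c' \<le> c"
  shows "psi2_integral M Y c \<le> psi2_integral M Y c'"
  unfolding psi2_integral_def
  using assms by (intro nn_integral_mono ennreal_leI) (simp add: divide_left_mono power_mono)

text \<open>\<open>E exp(\<bar>Z\<bar>\<^sup>2/c\<^sup>2)\<close> for \<open>Z\<close> centred Gaussian with covariance \<open>I/N\<close> in dimension \<open>N\<close>.\<close>

definition gauss_psi2_integral :: "nat \<Rightarrow> real \<Rightarrow> ennreal" where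
  "gauss_psi2_integral N c =
    (if 1 - 2 / (N * c\<^sup>2) > 0 then ennreal ((1 / (1 - 2 / (N * c\<^sup>2))) powr (N / 2)) else \<infinity>)"

definition gauss_psi2_norm :: "nat \<Rightarrow> real" where
  "gauss_psi2_norm N = sqrt (2 / real N) * sqrt (1 / (1 - (1/2) powr (2 / real N)))"

lemma sqrt_power_eq_powr: "(y::real) > 0 \<Longrightarrow> sqrt y ^ n = y powr (real n / 2)"
  by (simp add: powr_half_sqrt[symmetric] powr_realpow[symmetric] powr_powr)

lemma nn_integral_gauss_psi2:
  fixes c :: real
  assumes c: "c > 0"
  shows "ennreal (1 / sqrt pi ^ DIM('a)) * (\<integral>\<^sup>+(x::'a::euclidean_space).
      ennreal (exp (- (norm x)\<^sup>2) * exp (2 * (norm x)\<^sup>2 / (DIM('a) * c\<^sup>2))) \<partial>lborel)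
    = gauss_psi2_integral DIM('a) c"
proof -
  define a where "a = 1 - 2 / (DIM('a) * c\<^sup>2)"
  have "(\<integral>\<^sup>+(x::'a). ennreal (exp (- (norm x)\<^sup>2) * exp (2 * (norm x)\<^sup>2 / (DIM('a) * c\<^sup>2))) \<partial>lborel)
      = (\<integral>\<^sup>+(x::'a). ennreal (exp (- a * (norm x)\<^sup>2)) \<partial>lborel)"
    by (intro nn_integral_cong) (simp add: a_def exp_add[symmetric] algebra_simps)
  also have "\<dots> = (if a > 0 then ennreal (sqrt (pi / a) ^ DIM('a)) else \<infinity>)"
    by (rule nn_integral_exp_minus_scaled_square)
  finally have integral: "(\<integral>\<^sup>+(x::'a). ennreal (exp (- (norm x)\<^sup>2) * exp (2 * (norm x)\<^sup>2 / (DIM('a) * c\<^sup>2))) \<partial>lborel)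
      = (if a > 0 then ennreal (sqrt (pi / a) ^ DIM('a)) else \<infinity>)" .
  show ?thesis
  proof (cases "a > 0")
    case True
    have "1 / sqrt pi ^ DIM('a) * sqrt (pi / a) ^ DIM('a) = sqrt (1 / a) ^ DIM('a)"
      by (simp add: power_divide[symmetric] real_sqrt_divide)
    also have "\<dots> = (1 / a) powr (DIM('a) / 2)"
      using True by (simp add: sqrt_power_eq_powr)
    finally show ?thesis using True
      by (simp add: integral gauss_psi2_integral_def a_def[symmetric] ennreal_mult[symmetric])
  qed (simp add: integral gauss_psi2_integral_def a_def[symmetric] ennreal_mult_top)
qed

lemma psi2_integral_gaussian:
  fixes Z :: "'b \<Rightarrow> 'a::euclidean_space"
  assumes Z: "distributed M lborel Z (\<lambda>x. ennreal (gauss_cov_inv_dim x))" and c: "c > 0"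
  shows "psi2_integral M Z c = gauss_psi2_integral DIM('a) c"
proof -
  define N where "N = real DIM('a)"
  have N: "N > 0" by (simp add: N_def)
  define D where "D = (N / (2 * pi)) powr (N / 2)"
  have D: "D > 0" using N by (simp add: D_def)
  define \<beta> where "\<beta> = N / 2 - 1 / c\<^sup>2"
  have a: "1 - 2 / (N * c\<^sup>2) = 2 * \<beta> / N" using N c by (simp add: \<beta>_def field_simps)
  have "psi2_integral M Z c = (\<integral>\<^sup>+(x::'a). ennreal (gauss_cov_inv_dim x) * ennreal (exp ((norm x)\<^sup>2 / c\<^sup>2)) \<partial>lborel)"
    unfolding psi2_integral_def by (rule distributed_nn_integral[OF Z, symmetric]) measurable
  also have "\<dots> = (\<integral>\<^sup>+(x::'a). ennreal D * ennreal (exp (- \<beta> * (norm x)\<^sup>2)) \<partial>lborel)"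
  proof (intro nn_integral_cong)
    fix x :: 'a
    have "gauss_cov_inv_dim x * exp ((norm x)\<^sup>2 / c\<^sup>2) = D * exp (- \<beta> * (norm x)\<^sup>2)"
      unfolding gauss_cov_inv_dim_def D_def \<beta>_def N_def
      by (simp add: mult.assoc exp_add[symmetric] algebra_simps)
    then show "ennreal (gauss_cov_inv_dim x) * ennreal (exp ((norm x)\<^sup>2 / c\<^sup>2)) = ennreal D * ennreal (exp (- \<beta> * (norm x)\<^sup>2))"
      using D by (simp add: ennreal_mult[symmetric] gauss_cov_inv_dim_def)
  qed
  also have "\<dots> = ennreal D * (if \<beta> > 0 then ennreal (sqrt (pi / \<beta>) ^ DIM('a)) else \<infinity>)"
    using nn_integral_exp_minus_scaled_square[of \<beta>, where 'a='a] by (subst nn_integral_cmult) simp_all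
  also have "\<dots> = gauss_psi2_integral DIM('a) c"
  proof (cases "\<beta> > 0")
    case True
    have "D * sqrt (pi / \<beta>) ^ DIM('a) = D * (pi / \<beta>) powr (N / 2)"
      using True by (simp add: sqrt_power_eq_powr N_def)
    also have "\<dots> = (N / (2 * pi) * (pi / \<beta>)) powr (N / 2)"
      unfolding D_def by (rule powr_mult[symmetric])
    also have "N / (2 * pi) * (pi / \<beta>) = 1 / (1 - 2 / (N * c\<^sup>2))"
      using True N unfolding a by (simp add: field_simps)
    moreover have "1 - 2 / (real DIM('a) * c\<^sup>2) > 0" using True N a by (simp add: N_def)
    ultimately show ?thesis
      using D True by (simp add: gauss_psi2_integral_def ennreal_mult[symmetric] N_def)
  next
    case False
    then have "\<not> 1 - 2 / (N * c\<^sup>2) > 0" using N unfolding a by (simp add: zero_less_divide_iff)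
    then show ?thesis using False D by (simp add: gauss_psi2_integral_def N_def ennreal_mult_top)
  qed
  finally show ?thesis .
qed

lemma powr_le_iff_le_powr_inverse:
  fixes x y a :: real
  assumes "x > 0" "y > 0" "a > 0"
  shows "x powr a \<le> y \<longleftrightarrow> x \<le> y powr (1 / a)"
  using assms powr_mono2[of a "x" "y powr (1 / a)"] powr_mono2[of "1 / a" "x powr a" y]
  by (auto simp: powr_powr)

lemma gauss_psi2_integral_le_2_iff:
  assumes N: "N \<ge> 1" and c: "c > 0"
  shows "gauss_psi2_integral N c \<le> 2 \<longleftrightarrow> gauss_psi2_norm N \<le> c"
proof -
  define q where "q = (1 / 2 :: real) powr (2 / real N)"
  define a where "a = 1 - 2 / (N * c\<^sup>2)"
  have "1 < (2::real) powr (2 / real N)" using N by (intro gr_one_powr) auto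
  moreover have q2: "2 powr (2 / N) = 1 / q" by (simp add: q_def powr_divide)
  moreover have "0 < q" by (simp add: q_def)
  ultimately have q: "0 < q" "q < 1" by (simp_all add: less_divide_eq)
  have "gauss_psi2_norm N = sqrt (2 / (N * (1 - q)))"
    by (simp add: gauss_psi2_norm_def q_def real_sqrt_mult[symmetric])
  then have norm_le: "gauss_psi2_norm N \<le> c \<longleftrightarrow> 2 / (N * (1 - q)) \<le> c\<^sup>2"
    using c by (metis real_sqrt_le_iff real_sqrt_abs abs_of_pos)
  show ?thesis
  proof (cases "a > 0")
    case False
    then have "c\<^sup>2 \<le> 2 / N" using N c by (simp add: a_def field_simps)
    moreover have "2 / N < 2 / (N * (1 - q))" using q N by (simp add: field_simps)
    ultimately show ?thesis
      using False norm_le by (simp add: gauss_psi2_integral_def a_def[symmetric] top_unique)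
  next
    case True
    have "gauss_psi2_integral N c \<le> 2 \<longleftrightarrow> (1 / a) powr (N / 2) \<le> 2"
      using True by (simp add: gauss_psi2_integral_def a_def[symmetric] ennreal_le_iff2
          flip: ennreal_numeral)
    also have "\<dots> \<longleftrightarrow> 1 / a \<le> 1 / q"
      using True N by (subst powr_le_iff_le_powr_inverse) (auto simp: q2)
    also have "\<dots> \<longleftrightarrow> 2 / (N * (1 - q)) \<le> c\<^sup>2"
      using True q N c by (simp add: a_def field_simps)
    finally show ?thesis using norm_le by simp
  qed
qed

lemma gauss_psi2_norm_pos: "N \<ge> 1 \<Longrightarrow> gauss_psi2_norm N > 0"
proof -
  assume "N \<ge> 1"
  then have "1 < (2::real) powr (2 / real N)" by (intro gr_one_powr) auto
  then have "(1 / 2 :: real) powr (2 / real N) < 1" by (simp add: powr_divide)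
  with \<open>N \<ge> 1\<close> show ?thesis by (simp add: gauss_psi2_norm_def)
qed

lemma psi2_norm_gaussian:
  fixes Z :: "'b \<Rightarrow> 'a::euclidean_space"
  assumes Z: "distributed M lborel Z (\<lambda>x. ennreal (gauss_cov_inv_dim x))"
  shows "psi2_norm M Z = gauss_psi2_norm DIM('a)"
proof -
  have N: "DIM('a) \<ge> 1" by (simp add: Suc_le_eq)
  have "{c. c > 0 \<and> psi2_integral M Z c \<le> 2} = {gauss_psi2_norm DIM('a)..}"
    using gauss_psi2_norm_pos[OF N]
    by (auto simp: psi2_integral_gaussian[OF Z] gauss_psi2_integral_le_2_iff[OF N])
  then show ?thesis by (simp add: psi2_norm_eq_Inf)
qed

section \<open>Normalized sums of independent uniform vectors on the sphere\<close>

lemma psi2_norm_le: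
  assumes "c > 0" "psi2_integral M Y c \<le> 2"
  shows "psi2_norm M Y \<le> c"
  unfolding psi2_norm_eq_Inf using assms by (intro cInf_lower bdd_belowI[of _ 0]) auto

lemma psi2_norm_ge:
  assumes "c > 0" "2 < psi2_integral M Y c" and "c' > 0" "psi2_integral M Y c' \<le> 2"
  shows "c \<le> psi2_norm M Y"
  unfolding psi2_norm_eq_Inf
proof (rule cInf_greatest)
  show "{c. c > 0 \<and> psi2_integral M Y c \<le> 2} \<noteq> {}" using assms(3,4) by auto
  show "c \<le> x" if "x \<in> {c. c > 0 \<and> psi2_integral M Y c \<le> 2}" for x
  proof (rule ccontr)
    assume "\<not> c \<le> x"
    then have "psi2_integral M Y c \<le> psi2_integral M Y x" using that by (intro psi2_integral_antimono) auto
    then show False using that assms(2) by auto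
  qed
qed

lemma tendsto_psi2_norm:
  assumes z: "z > 0"
    and upper: "eventually (\<lambda>n. psi2_integral M (Y n) z \<le> 2) sequentially"
    and lower: "\<And>c. 0 < c \<Longrightarrow> c < z \<Longrightarrow> eventually (\<lambda>n. 2 < psi2_integral M (Y n) c) sequentially"
  shows "(\<lambda>n. psi2_norm M (Y n)) \<longlonglongrightarrow> z"
proof (rule order_tendstoI)
  fix a assume "a < z"
  define c where "c = (max a 0 + z) / 2"
  have c: "0 < c" "c < z" "a < c" using \<open>a < z\<close> z by (auto simp: c_def max_def)
  show "eventually (\<lambda>n. a < psi2_norm M (Y n)) sequentially"
    using lower[OF c(1,2)] upper
    by eventually_elim (use c z psi2_norm_ge[of c M _ z] in force)
next
  fix b assume "z < b"
  show "eventually (\<lambda>n. psi2_norm M (Y n) < b) sequentially"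
    using upper by eventually_elim (use \<open>z < b\<close> psi2_norm_le[OF z] in force)
qed

definition normalized_sum :: "(nat \<Rightarrow> 'm \<Rightarrow> 'a::real_vector) \<Rightarrow> nat \<Rightarrow> 'm \<Rightarrow> 'a" where
  "normalized_sum X n \<omega> = (\<Sum>j\<in>{1..n}. (1 / sqrt (real n)) *\<^sub>R X j \<omega>)"

lemma ennreal_exp_norm_square_eq_nn_integral:
  fixes y :: "'a::euclidean_space" and c :: real
  assumes c: "c > 0"
  shows "ennreal (exp ((norm y)\<^sup>2 / c\<^sup>2))
    = ennreal (1 / sqrt pi ^ DIM('a)) * (\<integral>\<^sup>+x. ennreal (exp (((2 / c) *\<^sub>R y) \<bullet> x - 1 * (norm x)\<^sup>2)) \<partial>lborel)"
  using nn_integral_exp_inner_minus_square[of 1 "(2 / c) *\<^sub>R y"] c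
  by (simp add: power_mult_distrib power_divide ennreal_mult[symmetric])

locale uniform_sphere_iid = prob_space M for M :: "'m measure" +
  fixes X :: "nat \<Rightarrow> 'm \<Rightarrow> 'a::euclidean_space"
  assumes indep: "indep_vars (\<lambda>_. borel) X UNIV"
    and distr_uniform_sphere: "\<And>j. distr M borel (X j) = uniform_sphere"
begin

lemma borel_measurable_X [measurable]: "X j \<in> borel_measurable M"
  using indep by (auto simp: indep_vars_def)

lemma nn_integral_exp_inner_X: "(\<integral>\<^sup>+\<omega>. ennreal (exp (s \<bullet> X j \<omega>)) \<partial>M) = sphere_mgf s"
  unfolding sphere_mgf_def distr_uniform_sphere[symmetric, of j] by (subst nn_integral_distr) simp_all

lemma psi2_integral_normalized_sum:
  assumes c: "c > 0"
  shows "psi2_integral M (normalized_sum X n) c = ennreal (1 / sqrt pi ^ DIM('a))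
    * (\<integral>\<^sup>+(x::'a). ennreal (exp (- (norm x)\<^sup>2)) * sphere_mgf ((2 / (c * sqrt n)) *\<^sub>R x) ^ n \<partial>lborel)"
proof -
  interpret P: pair_sigma_finite M "lborel :: 'a measure"
    by (simp add: pair_sigma_finite_def prob_space_imp_sigma_finite prob_space_axioms
        lborel.sigma_finite_measure_axioms)
  let ?S = "normalized_sum X n"
  define v where "v = 2 / (c * sqrt n)"
  have [measurable]: "?S \<in> borel_measurable M" unfolding normalized_sum_def[abs_def] by measurable
  have "psi2_integral M ?S c
      = ennreal (1 / sqrt pi ^ DIM('a)) * (\<integral>\<^sup>+\<omega>. \<integral>\<^sup>+x. ennreal (exp (((2 / c) *\<^sub>R ?S \<omega>) \<bullet> x - 1 * (norm x)\<^sup>2)) \<partial>lborel \<partial>M)"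
    unfolding psi2_integral_def ennreal_exp_norm_square_eq_nn_integral[OF c]
    by (rule nn_integral_cmult) measurable
  also have "(\<integral>\<^sup>+\<omega>. \<integral>\<^sup>+x. ennreal (exp (((2 / c) *\<^sub>R ?S \<omega>) \<bullet> x - 1 * (norm x)\<^sup>2)) \<partial>lborel \<partial>M)
      = (\<integral>\<^sup>+x. \<integral>\<^sup>+\<omega>. ennreal (exp (((2 / c) *\<^sub>R ?S \<omega>) \<bullet> x - 1 * (norm x)\<^sup>2)) \<partial>M \<partial>lborel)"
    by (rule P.Fubini'[symmetric]) measurable
  also have "\<dots> = (\<integral>\<^sup>+(x::'a). ennreal (exp (- (norm x)\<^sup>2)) * sphere_mgf (v *\<^sub>R x) ^ n \<partial>lborel)"
  proof (intro nn_integral_cong)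
    fix x :: 'a
    have "(\<integral>\<^sup>+\<omega>. ennreal (exp (((2 / c) *\<^sub>R ?S \<omega>) \<bullet> x - 1 * (norm x)\<^sup>2)) \<partial>M)
        = (\<integral>\<^sup>+\<omega>. ennreal (exp (- (norm x)\<^sup>2)) * (\<Prod>j\<in>{1..n}. ennreal (exp ((v *\<^sub>R x) \<bullet> X j \<omega>))) \<partial>M)"
    proof (intro nn_integral_cong)
      fix \<omega>
      have "((2 / c) *\<^sub>R ?S \<omega>) \<bullet> x = (\<Sum>j\<in>{1..n}. (v *\<^sub>R x) \<bullet> X j \<omega>)"
        unfolding normalized_sum_def v_def
        by (simp add: inner_sum_right sum_distrib_left sum_divide_distrib inner_commute)
      then have "exp (((2 / c) *\<^sub>R ?S \<omega>) \<bullet> x - 1 * (norm x)\<^sup>2)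
          = exp (- (norm x)\<^sup>2) * (\<Prod>j\<in>{1..n}. exp ((v *\<^sub>R x) \<bullet> X j \<omega>))"
        by (simp add: exp_sum[symmetric] exp_add[symmetric])
      then show "ennreal (exp (((2 / c) *\<^sub>R ?S \<omega>) \<bullet> x - 1 * (norm x)\<^sup>2))
          = ennreal (exp (- (norm x)\<^sup>2)) * (\<Prod>j\<in>{1..n}. ennreal (exp ((v *\<^sub>R x) \<bullet> X j \<omega>)))"
        by (simp add: prod_ennreal ennreal_mult prod_nonneg)
    qed
    also have "\<dots> = ennreal (exp (- (norm x)\<^sup>2)) * (\<Prod>j\<in>{1..n}. \<integral>\<^sup>+\<omega>. ennreal (exp ((v *\<^sub>R x) \<bullet> X j \<omega>)) \<partial>M)"
      by (subst nn_integral_cmult, measurable, subst indep_vars_nn_integral)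
         (auto intro: indep_vars_compose2[OF indep_vars_subset[OF indep]])
    also have "\<dots> = ennreal (exp (- (norm x)\<^sup>2)) * sphere_mgf (v *\<^sub>R x) ^ n"
      by (simp only: nn_integral_exp_inner_X) simp
    finally show "(\<integral>\<^sup>+\<omega>. ennreal (exp (((2 / c) *\<^sub>R ?S \<omega>) \<bullet> x - 1 * (norm x)\<^sup>2)) \<partial>M)
        = ennreal (exp (- (norm x)\<^sup>2)) * sphere_mgf (v *\<^sub>R x) ^ n" .
  qed
  finally show ?thesis by (simp add: v_def)
qed


lemma power2_norm_scaleR_div_sqrt:
  fixes c :: real and n :: nat and x :: 'a
  assumes "n \<ge> 1" "c > 0"
  shows "(norm ((2 / (c * sqrt n)) *\<^sub>R x))\<^sup>2 / (2 * DIM('a)) = (2 * (norm x)\<^sup>2 / (DIM('a) * c\<^sup>2)) / n"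
  using assms by (simp add: power_mult_distrib power_divide field_simps)

lemma psi2_integral_normalized_sum_le:
  assumes c: "c > 0" and n: "n \<ge> 1"
  shows "psi2_integral M (normalized_sum X n) c \<le> gauss_psi2_integral DIM('a) c"
proof -
  have "psi2_integral M (normalized_sum X n) c \<le> ennreal (1 / sqrt pi ^ DIM('a))
      * (\<integral>\<^sup>+(x::'a). ennreal (exp (- (norm x)\<^sup>2) * exp (2 * (norm x)\<^sup>2 / (DIM('a) * c\<^sup>2))) \<partial>lborel)"
    unfolding psi2_integral_normalized_sum[OF c]
  proof (intro mult_left_mono nn_integral_mono)
    fix x :: 'a
    have "sphere_mgf ((2 / (c * sqrt n)) *\<^sub>R x) ^ n
        \<le> ennreal (exp ((norm ((2 / (c * sqrt n)) *\<^sub>R x))\<^sup>2 / (2 * DIM('a)))) ^ n"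
      by (intro power_mono sphere_mgf_le) simp
    also have "\<dots> = ennreal (exp ((2 * (norm x)\<^sup>2 / (DIM('a) * c\<^sup>2)) / n) ^ n)"
      by (subst power2_norm_scaleR_div_sqrt[OF n c], subst ennreal_power) auto
    also have "exp ((2 * (norm x)\<^sup>2 / (DIM('a) * c\<^sup>2)) / n) ^ n = exp (2 * (norm x)\<^sup>2 / (DIM('a) * c\<^sup>2))"
      using n by (simp add: exp_of_nat_mult[symmetric])
    finally show "ennreal (exp (- (norm x)\<^sup>2)) * sphere_mgf ((2 / (c * sqrt n)) *\<^sub>R x) ^ n
        \<le> ennreal (exp (- (norm x)\<^sup>2) * exp (2 * (norm x)\<^sup>2 / (DIM('a) * c\<^sup>2)))"
      by (simp add: ennreal_mult mult_left_mono)
  qed simp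
  also have "\<dots> = gauss_psi2_integral DIM('a) c" by (rule nn_integral_gauss_psi2[OF c])
  finally show ?thesis .
qed

text \<open>Conversely \<open>sphere_mgf s \<ge> 1 + \<bar>s\<bar>\<^sup>2/(2N)\<close>, and \<open>(1 + a/n)\<^sup>n \<longrightarrow> e\<^sup>a\<close>, so Fatou's lemma shows
  that the upper bound is asymptotically sharp.\<close>

lemma gauss_psi2_integral_le_liminf:
  assumes c: "c > 0"
  shows "gauss_psi2_integral DIM('a) c \<le> liminf (\<lambda>n. psi2_integral M (normalized_sum X n) c)"
proof -
  define K where "K = 1 / sqrt pi ^ DIM('a)"
  have K: "K > 0" by (simp add: K_def)
  define a where "a x = 2 * (norm x)\<^sup>2 / (DIM('a) * c\<^sup>2)" for x :: 'a
  have a: "a x \<ge> 0" for x using c by (simp add: a_def)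
  define w where "w n x = ennreal (K * exp (- (norm x)\<^sup>2) * (1 + a x / n) ^ n)" for n :: nat and x :: 'a
  have [measurable]: "w n \<in> borel_measurable lborel" for n unfolding w_def[abs_def] a_def by measurable
  have "gauss_psi2_integral DIM('a) c = (\<integral>\<^sup>+x. ennreal K * ennreal (exp (- (norm x)\<^sup>2) * exp (a x)) \<partial>lborel)"
    unfolding nn_integral_gauss_psi2[OF c, symmetric] K_def a_def
    by (rule nn_integral_cmult[symmetric]) measurable
  also have "\<dots> = (\<integral>\<^sup>+x. liminf (\<lambda>n. w n x) \<partial>lborel)"
  proof (intro nn_integral_cong)
    fix x :: 'a
    have "(\<lambda>n. w n x) \<longlonglongrightarrow> ennreal (K * exp (- (norm x)\<^sup>2) * exp (a x))"
      unfolding w_def by (intro tendsto_ennrealI tendsto_mult_left tendsto_exp_limit_sequentially)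
    then show "ennreal K * ennreal (exp (- (norm x)\<^sup>2) * exp (a x)) = liminf (\<lambda>n. w n x)"
      using K by (simp add: lim_imp_Liminf ennreal_mult[symmetric] mult.assoc)
  qed
  also have "\<dots> \<le> liminf (\<lambda>n. integral\<^sup>N lborel (w n))"
    by (rule nn_integral_liminf) simp
  also have "\<dots> \<le> liminf (\<lambda>n. psi2_integral M (normalized_sum X n) c)"
  proof (intro Liminf_mono eventually_sequentiallyI[of 1])
    fix n :: nat assume n: "n \<ge> 1"
    have "integral\<^sup>N lborel (w n)
        \<le> (\<integral>\<^sup>+(x::'a). ennreal K * (ennreal (exp (- (norm x)\<^sup>2)) * sphere_mgf ((2 / (c * sqrt n)) *\<^sub>R x) ^ n) \<partial>lborel)"
    proof (intro nn_integral_mono)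
      fix x :: 'a
      have "ennreal ((1 + a x / n) ^ n) = ennreal (1 + (norm ((2 / (c * sqrt n)) *\<^sub>R x))\<^sup>2 / (2 * DIM('a))) ^ n"
        using a[of x] by (subst power2_norm_scaleR_div_sqrt[OF n c], subst ennreal_power) (auto simp: a_def)
      also have "\<dots> \<le> sphere_mgf ((2 / (c * sqrt n)) *\<^sub>R x) ^ n"
        by (intro power_mono sphere_mgf_ge) simp
      finally show "w n x \<le> ennreal K * (ennreal (exp (- (norm x)\<^sup>2)) * sphere_mgf ((2 / (c * sqrt n)) *\<^sub>R x) ^ n)"
        unfolding w_def using K a[of x] by (simp add: ennreal_mult mult.assoc mult_left_mono)
    qed
    also have "\<dots> = psi2_integral M (normalized_sum X n) c"
      unfolding psi2_integral_normalized_sum[OF c] K_def by (rule nn_integral_cmult) measurable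
    finally show "integral\<^sup>N lborel (w n) \<le> psi2_integral M (normalized_sum X n) c" .
  qed
  finally show ?thesis .
qed

lemma tendsto_psi2_norm_normalized_sum:
  "(\<lambda>n. psi2_norm M (normalized_sum X n)) \<longlonglongrightarrow> gauss_psi2_norm DIM('a)"
proof (rule tendsto_psi2_norm)
  have N: "DIM('a) \<ge> 1" by (simp add: Suc_le_eq)
  let ?z = "gauss_psi2_norm DIM('a)"
  show z: "?z > 0" using gauss_psi2_norm_pos[OF N] .
  have "gauss_psi2_integral DIM('a) ?z \<le> 2" using gauss_psi2_integral_le_2_iff[OF N z] by simp
  with psi2_integral_normalized_sum_le[OF z]
  have "psi2_integral M (normalized_sum X n) ?z \<le> 2" if "n \<ge> 1" for n
    using that order_trans by blast
  then show "eventually (\<lambda>n. psi2_integral M (normalized_sum X n) ?z \<le> 2) sequentially"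
    by (rule eventually_sequentiallyI)
  show "eventually (\<lambda>n. 2 < psi2_integral M (normalized_sum X n) c) sequentially" if "0 < c" "c < ?z" for c
  proof (rule less_LiminfD)
    have "2 < gauss_psi2_integral DIM('a) c" using gauss_psi2_integral_le_2_iff[OF N \<open>0 < c\<close>] that by auto
    then show "2 < liminf (\<lambda>n. psi2_integral M (normalized_sum X n) c)"
      using gauss_psi2_integral_le_liminf[OF \<open>0 < c\<close>] by simp
  qed
qed

end


theorem mainTheorem4:
  fixes M :: "'a measure" and X :: "nat \<Rightarrow> 'a \<Rightarrow> real ^ 'n"
    and M' :: "'b measure" and Z :: "'b \<Rightarrow> real ^ 'n"
  assumes "prob_space M"
    and "prob_space.indep_vars M (\<lambda>_. borel) X UNIV"
    and "\<And>j. distr M borel (X j) = uniform_sphere"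
    and "prob_space M'"
    and "distributed M' lborel Z (\<lambda>x. ennreal (gauss_cov_inv_dim x))"
  shows "((\<lambda>n. psi2_norm M (\<lambda>\<omega>. (\<Sum>j\<in>{1..n}. (1 / sqrt (real n)) *\<^sub>R X j \<omega>)))
            \<longlonglongrightarrow> psi2_norm M' Z)
     \<and> psi2_norm M' Z = sqrt (2 / real CARD('n)) * sqrt (1 / (1 - (1/2) powr (2 / real CARD('n))))"
proof -
  interpret uniform_sphere_iid M X
    using assms(1-3) by (simp add: uniform_sphere_iid_def uniform_sphere_iid_axioms_def)
  have "psi2_norm M' Z = gauss_psi2_norm CARD('n)"
    using psi2_norm_gaussian[OF assms(5)] by simp
  moreover have "(\<lambda>n. psi2_norm M (normalized_sum X n)) \<longlonglongrightarrow> gauss_psi2_norm CARD('n)"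
    using tendsto_psi2_norm_normalized_sum by simp
  ultimately show ?thesis by (simp add: normalized_sum_def[abs_def] gauss_psi2_norm_def)
qed

end
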